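(* Let $\mathcal{T}$ be the scheme on $\mathcal{M}$ given by $$\mathcal{T}(\mathbf{p})_{2i}=M_{1/2}\big(M_{3/4}(p_{i-1},p_i),\,M_{1/4}(p_i,p_{i+1})\big),\qquad \mathcal{T}(\mathbf{p})_{2i+1}=M_{1/2}(p_i,p_{i+1}),\quad i\in\mathbb{Z}.$$ Then $\delta(\mathcal{T}(\mathbf{p}))\le\tfrac12\,\delta(\mathbf{p})$ for all manifold data $\mathbf{p}$, and $\mathcal{T}$ is convergent.
   Context: $\mathcal{M}$ is a geodesically complete connected Riemannian manifold with distance $d$. For $p_0,p_1\in\mathcal{M}$ a minimal geodesic $\gamma:[0,1]\to\mathcal{M}$ from $p_0$ to $p_1$ is fixed and $M_t(p_0,p_1)=\gamma(t)$, $t\in[0,1]$, so all $M_t(p_0,p_1)$ lie on the same geodesic and $d(M_s(p_0,p_1),M_t(p_0,p_1))=|s-t|d(p_0,p_1)$. Data $\mathbf{p}=(p_i)_{i\in\mathbb{Z}}$ with $\delta(\mathbf{p})=\sup_id(p_i,p_{i+1})<\infty$. This is the adaptation via the symmetric geodesic inductive mean of the linear cubic B-spline scheme with mask $\frac18(1,4,6,4,1)$. Convergence: for every data $\mathbf{p}$ the curves $\mathrm{PG}_k(\mathcal{T}^k(\mathbf{p}))$ converge uniformly on $\mathbb{R}$, where $\mathrm{PG}_k(\mathbf{q})(t)=M_{2^kt-n}(q_n,q_{n+1})$ for $t\in[2^{-k}n,2^{-k}(n+1))$. *)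

theory Defs
  imports "HOL-Analysis.Analysis"
begin

text \<open>Abstract setting: the manifold is replaced by a complete metric space
  (a geodesically complete Riemannian manifold is complete by Hopf--Rinow), and
  the fixed minimal geodesics are encoded by a selection M with M t p0 p1 = gamma(t).\<close>

definition geodesic_selection :: "(real \<Rightarrow> 'a::metric_space \<Rightarrow> 'a \<Rightarrow> 'a) \<Rightarrow> bool" where
  "geodesic_selection M \<longleftrightarrow>
     (\<forall>p0 p1. M 0 p0 p1 = p0 \<and> M 1 p0 p1 = p1 \<and>
       (\<forall>s t. s \<in> {0..1} \<longrightarrow> t \<in> {0..1} \<longrightarrow>
          dist (M s p0 p1) (M t p0 p1) = \<bar>s - t\<bar> * dist p0 p1))"

definition delta :: "(int \<Rightarrow> 'a::metric_space) \<Rightarrow> real" where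
  "delta p = (SUP i. dist (p i) (p (i + 1)))"

definition finite_delta :: "(int \<Rightarrow> 'a::metric_space) \<Rightarrow> bool" where
  "finite_delta p \<longleftrightarrow> bdd_above (range (\<lambda>i. dist (p i) (p (i + 1))))"

definition cubic_scheme :: "(real \<Rightarrow> 'a \<Rightarrow> 'a \<Rightarrow> 'a) \<Rightarrow> (int \<Rightarrow> 'a) \<Rightarrow> int \<Rightarrow> 'a" where
  "cubic_scheme M p j =
     (let i = j div 2 in
      if even j then M (1/2) (M (3/4) (p (i - 1)) (p i)) (M (1/4) (p i) (p (i + 1)))
      else M (1/2) (p i) (p (i + 1)))"

definition PG :: "(real \<Rightarrow> 'a \<Rightarrow> 'a \<Rightarrow> 'a) \<Rightarrow> nat \<Rightarrow> (int \<Rightarrow> 'a) \<Rightarrow> real \<Rightarrow> 'a" where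
  "PG M k q t = (let n = \<lfloor>2 ^ k * t\<rfloor> in M (2 ^ k * t - of_int n) (q n) (q (n + 1)))"

end

theory Submission
  imports Defs
begin

text \<open>
  Write T for the geodesic cubic B-spline scheme and let D bound the
  distances of consecutive data points.  Every point produced by T lies on a selected
  geodesic between two nearby coarse points, so all estimates reduce to the defining
  property d(M s a b, M t a b) = |s - t| d(a, b) and the triangle inequality.  The central
  local fact is that the even point T(p)(2i) is within D/4 of both quarter points
  M(3/4)(p(i-1), p(i)) and M(1/4)(p(i), p(i+1)).  From it:
  (1) consecutive refined points are within D/2 (contractivity; this is the bound on
      delta and, iterated, gives D/2^k at level k);
  (2) each refined point T(p)(m) is within D/2 of its parent p(m div 2).
  Since the piecewise geodesic interpolant stays within D of its left node, consecutive
  interpolants PG_k and PG_(k+1) are uniformly 2D/2^k apart.  A general lemma turns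
  geometrically decaying uniform steps into uniform convergence in a complete space.
\<close>

lemma geodesic_dist:
  assumes "geodesic_selection M" and "0 \<le> s" "s \<le> 1" "0 \<le> t" "t \<le> 1"
  shows "dist (M s a b) (M t a b) = \<bar>s - t\<bar> * dist a b"
  using assms unfolding geodesic_selection_def by auto

lemma geodesic_dist_start:
  assumes G: "geodesic_selection M" and "0 \<le> s" "s \<le> 1"
  shows "dist (M s a b) a = s * dist a b"
proof -
  have "M 0 a b = a" using G unfolding geodesic_selection_def by auto
  then show ?thesis using geodesic_dist[OF G, of s 0 a b] assms by simp
qed

lemma geodesic_dist_end:
  assumes G: "geodesic_selection M" and "0 \<le> s" "s \<le> 1"
  shows "dist (M s a b) b = (1 - s) * dist a b"
proof -
  have "M 1 a b = b" using G unfolding geodesic_selection_def by auto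
  then show ?thesis using geodesic_dist[OF G, of s 1 a b] assms by simp
qed

lemma cubic_scheme_even:
  "cubic_scheme M p (2 * i) = M (1/2) (M (3/4) (p (i - 1)) (p i)) (M (1/4) (p i) (p (i + 1)))"
  unfolding cubic_scheme_def by simp

lemma cubic_scheme_odd: "cubic_scheme M p (2 * i + 1) = M (1/2) (p i) (p (i + 1))"
  unfolding cubic_scheme_def by simp

text \<open>The even point is the midpoint of two quarter points, each within D/4 of p(i);
  so they are at most D/2 apart and the midpoint is within D/4 of both.\<close>

lemma even_point_near_quarter_points:
  assumes G: "geodesic_selection M" and D: "\<And>i. dist (p i) (p (i + 1)) \<le> D"
  shows "dist (cubic_scheme M p (2 * i)) (M (3/4) (p (i - 1)) (p i)) \<le> D / 4"
    and "dist (cubic_scheme M p (2 * i)) (M (1/4) (p i) (p (i + 1))) \<le> D / 4"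
proof -
  define A where "A = M (3/4) (p (i - 1)) (p i)"
  define B where "B = M (1/4) (p i) (p (i + 1))"
  have "dist A (p i) = dist (p (i - 1)) (p i) / 4"
    using geodesic_dist_end[OF G, of "3/4"] unfolding A_def by simp
  moreover have "dist (p i) B = dist (p i) (p (i + 1)) / 4"
    using geodesic_dist_start[OF G, of "1/4"] unfolding B_def by (simp add: dist_commute)
  moreover have "dist (p (i - 1)) (p i) \<le> D" using D[of "i - 1"] by simp
  ultimately have AB: "dist A B \<le> D / 2"
    using dist_triangle[of A B "p i"] D[of i] by linarith
  have "dist (M (1/2) A B) A = dist A B / 2" "dist (M (1/2) A B) B = dist A B / 2"
    using geodesic_dist_start[OF G, of "1/2"] geodesic_dist_end[OF G, of "1/2"] by simp_all
  then show "dist (cubic_scheme M p (2 * i)) A \<le> D / 4"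
    and "dist (cubic_scheme M p (2 * i)) B \<le> D / 4"
    using AB unfolding cubic_scheme_even A_def B_def by simp_all
qed

text \<open>Contractivity: one refinement step halves the bound on consecutive distances.
  Both the even-odd and the odd-even pair are compared through a quarter point.\<close>

lemma cubic_scheme_contracts:
  assumes G: "geodesic_selection M" and D: "\<And>i. dist (p i) (p (i + 1)) \<le> D"
  shows "dist (cubic_scheme M p j) (cubic_scheme M p (j + 1)) \<le> D / 2"
proof (cases "even j")
  case True
  then obtain i where j: "j = 2 * i" by (rule evenE)
  have "dist (M (1/4) (p i) (p (i + 1))) (M (1/2) (p i) (p (i + 1))) \<le> D / 4"
    using geodesic_dist[OF G, of "1/4" "1/2"] D[of i] by simp
  then show ?thesis
    using even_point_near_quarter_points(2)[where p=p and D=D, OF G D, of i]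
      dist_triangle[of "cubic_scheme M p j" "cubic_scheme M p (j + 1)" "M (1/4) (p i) (p (i + 1))"]
    unfolding j cubic_scheme_odd by linarith
next
  case False
  then obtain i where j: "j = 2 * i + 1" by (rule oddE)
  have next_even: "j + 1 = 2 * (i + 1)" using j by simp
  have "dist (M (1/2) (p i) (p (i + 1))) (M (3/4) (p i) (p (i + 1))) \<le> D / 4"
    using geodesic_dist[OF G, of "1/2" "3/4"] D[of i] by simp
  then show ?thesis
    using even_point_near_quarter_points(1)[where p=p and D=D, OF G D, of "i + 1"] cubic_scheme_odd[of M p i]
      dist_triangle[of "cubic_scheme M p j" "cubic_scheme M p (j + 1)" "M (3/4) (p i) (p (i + 1))"]
    unfolding next_even unfolding j by (simp add: dist_commute)
qed

lemma cubic_scheme_iterate_contracts: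
  assumes G: "geodesic_selection M" and D: "\<And>i. dist (p i) (p (i + 1)) \<le> D"
  shows "dist ((cubic_scheme M ^^ k) p j) ((cubic_scheme M ^^ k) p (j + 1)) \<le> D / 2 ^ k"
proof (induction k arbitrary: j)
  case 0
  then show ?case using D by simp
next
  case (Suc k)
  show ?case
    using cubic_scheme_contracts[where p="(cubic_scheme M ^^ k) p" and D="D / 2 ^ k", OF G Suc.IH, of j] by simp
qed

lemma cubic_scheme_near_parent:
  assumes G: "geodesic_selection M" and D: "\<And>i. dist (p i) (p (i + 1)) \<le> D"
  shows "dist (cubic_scheme M p m) (p (m div 2)) \<le> D / 2"
proof (cases "even m")
  case True
  then obtain i where m: "m = 2 * i" by (rule evenE)
  have "dist (M (1/4) (p i) (p (i + 1))) (p i) \<le> D / 4"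
    using geodesic_dist_start[OF G, of "1/4"] D[of i] by simp
  then show ?thesis
    using even_point_near_quarter_points(2)[where p=p and D=D, OF G D, of i]
      dist_triangle[of "cubic_scheme M p m" "p i" "M (1/4) (p i) (p (i + 1))"]
    unfolding m by simp
next
  case False
  then obtain i where m: "m = 2 * i + 1" by (rule oddE)
  show ?thesis
    using geodesic_dist_start[OF G, of "1/2"] D[of i] unfolding m cubic_scheme_odd by simp
qed

text \<open>On each dyadic interval the interpolant runs along one geodesic segment, so it
  stays within D of the left node.\<close>

lemma PG_near_left_node:
  assumes G: "geodesic_selection M" and D: "\<And>i. dist (q i) (q (i + 1)) \<le> D"
  shows "dist (PG M k q t) (q \<lfloor>2 ^ k * t\<rfloor>) \<le> D"
proof -
  define n where "n = \<lfloor>2 ^ k * t\<rfloor>"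
  define s where "s = 2 ^ k * t - of_int n"
  have s: "0 \<le> s" "s \<le> 1" unfolding s_def n_def by linarith+
  have "PG M k q t = M s (q n) (q (n + 1))" unfolding PG_def s_def n_def Let_def by simp
  then have "dist (PG M k q t) (q n) = s * dist (q n) (q (n + 1))"
    using geodesic_dist_start[OF G s] by simp
  also have "\<dots> \<le> 1 * D" using s D[of n] by (intro mult_mono) auto
  finally show ?thesis unfolding n_def by simp
qed

text \<open>Refining once moves the interpolant uniformly by at most 2D: the node to the left
  of t at level k + 1 is a child of the node to the left of t at level k.\<close>

lemma PG_refinement_step:
  assumes G: "geodesic_selection M" and D: "\<And>i. dist (q i) (q (i + 1)) \<le> D"
  shows "dist (PG M (Suc k) (cubic_scheme M q) t) (PG M k q t) \<le> 2 * D"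
proof -
  define m where "m = \<lfloor>2 ^ Suc k * t\<rfloor>"
  have parent: "m div 2 = \<lfloor>2 ^ k * t\<rfloor>"
    using floor_divide_real_eq_div[of 2 "2 * (2 ^ k * t)"] unfolding m_def by (simp add: mult.assoc)
  have "dist (PG M (Suc k) (cubic_scheme M q) t) (cubic_scheme M q m) \<le> D / 2"
    unfolding m_def using PG_near_left_node[where q="cubic_scheme M q" and D="D / 2", OF G cubic_scheme_contracts[where p=q and D=D, OF G D]] .
  moreover have "dist (cubic_scheme M q m) (q (m div 2)) \<le> D / 2"
    using cubic_scheme_near_parent[where p=q and D=D, OF G D] .
  moreover have "dist (PG M k q t) (q (m div 2)) \<le> D"
    unfolding parent using PG_near_left_node[where q=q and D=D, OF G D] .
  ultimately show ?thesis
    using dist_triangle[of "PG M (Suc k) (cubic_scheme M q) t" "q (m div 2)" "cubic_scheme M q m"]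
      dist_triangle[of "PG M (Suc k) (cubic_scheme M q) t" "PG M k q t" "q (m div 2)"]
    by (simp add: dist_commute)
qed

lemma uniformly_convergent_geometric_steps:
  fixes f :: "nat \<Rightarrow> 'b \<Rightarrow> 'a::complete_space"
  assumes step: "\<And>k x. x \<in> S \<Longrightarrow> dist (f k x) (f (Suc k) x) \<le> C * c ^ k"
    and c: "0 \<le> c" "c < 1"
  shows "uniformly_convergent_on S f"
proof -
  have tail: "dist (f m x) (f (m + n) x) \<le> C * c ^ m / (1 - c)" if x: "x \<in> S" for m n x
  proof -
    have C: "0 \<le> C" using step[OF x, of 0] zero_le_dist order_trans by (metis power_0 mult_1_right)
    have telescope: "dist (f m x) (f (m + n) x) \<le> C * c ^ m * (\<Sum>j<n. c ^ j)"
    proof (induction n)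
      case 0
      then show ?case by simp
    next
      case (Suc n)
      have "dist (f m x) (f (m + Suc n) x)
            \<le> dist (f m x) (f (m + n) x) + dist (f (m + n) x) (f (Suc (m + n)) x)"
        by (simp add: dist_triangle)
      also have "\<dots> \<le> C * c ^ m * (\<Sum>j<n. c ^ j) + C * c ^ (m + n)"
        using Suc.IH step[OF x, of "m + n"] by linarith
      also have "\<dots> = C * c ^ m * (\<Sum>j<Suc n. c ^ j)" by (simp add: power_add algebra_simps)
      finally show ?case .
    qed
    have "(\<Sum>j<n. c ^ j) \<le> 1 / (1 - c)"
      using c by (simp add: sum_gp_strict divide_right_mono)
    then have "C * c ^ m * (\<Sum>j<n. c ^ j) \<le> C * c ^ m * (1 / (1 - c))"
      using C c by (intro mult_left_mono) simp_all
    with telescope show ?thesis by simp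
  qed
  have "uniformly_Cauchy_on S f"
  proof (rule uniformly_Cauchy_onI')
    fix e :: real assume "e > 0"
    have "(\<lambda>m. C * c ^ m / (1 - c)) \<longlonglongrightarrow> C * 0 / (1 - c)"
      using c by (intro tendsto_intros LIMSEQ_power_zero) auto
    then have "eventually (\<lambda>m. C * c ^ m / (1 - c) < e) sequentially"
      using \<open>e > 0\<close> by (intro order_tendstoD(2)) simp_all
    then obtain N where N: "\<And>m. m \<ge> N \<Longrightarrow> C * c ^ m / (1 - c) < e"
      unfolding eventually_sequentially by blast
    have "dist (f m x) (f n x) < e" if "x \<in> S" "N \<le> m" "m < n" for x m n
      using tail[OF \<open>x \<in> S\<close>, of m "n - m"] N[OF \<open>N \<le> m\<close>] \<open>m < n\<close> by simp
    then show "\<exists>N. \<forall>x\<in>S. \<forall>m\<ge>N. \<forall>n>m. dist (f m x) (f n x) < e" by blast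
  qed
  then show ?thesis by (rule Cauchy_uniformly_convergent)
qed

lemma dist_le_delta:
  assumes "finite_delta p"
  shows "dist (p i) (p (i + 1)) \<le> delta p"
  using assms unfolding finite_delta_def delta_def by (intro cSUP_upper) auto

theorem mainTheorem10:
  fixes M :: "real \<Rightarrow> 'a::complete_space \<Rightarrow> 'a \<Rightarrow> 'a"
  assumes "geodesic_selection M"
  shows "\<forall>p :: int \<Rightarrow> 'a. finite_delta p \<longrightarrow>
           delta (cubic_scheme M p) \<le> delta p / 2 \<and>
           uniformly_convergent_on UNIV (\<lambda>k. PG M k ((cubic_scheme M ^^ k) p))"
proof (intro allI impI conjI)
  fix p :: "int \<Rightarrow> 'a"
  assume "finite_delta p"
  then have D: "\<And>i. dist (p i) (p (i + 1)) \<le> delta p" by (rule dist_le_delta)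
  show "delta (cubic_scheme M p) \<le> delta p / 2"
    unfolding delta_def[of "cubic_scheme M p"]
    using cubic_scheme_contracts[where p=p and D="delta p", OF assms D]
    by (intro cSUP_least) simp_all
  have "dist (PG M k ((cubic_scheme M ^^ k) p) t) (PG M (Suc k) ((cubic_scheme M ^^ Suc k) p) t)
          \<le> 2 * delta p * (1/2) ^ k" for k t
    using PG_refinement_step[where q="(cubic_scheme M ^^ k) p" and D="delta p / 2 ^ k",
        OF assms cubic_scheme_iterate_contracts[where p=p and D="delta p", OF assms D], of k t]
    by (simp add: dist_commute power_one_over)
  then show "uniformly_convergent_on UNIV (\<lambda>k. PG M k ((cubic_scheme M ^^ k) p))"
    by (intro uniformly_convergent_geometric_steps[where C = "2 * delta p" and c = "1/2"]) simp_all
qed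

end
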